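(* Let $\langle A, \leq, \otimes, \ominus, \mathbf{1}\rangle$ be a residuated partially ordered monoid with bottom element $\bot$, let $k\geq1$ and $a = a_1\ldots a_k$, $b = b_1\ldots b_k \in Lex_k(A)$. If $\delta(a,b) < \gamma(a,b)$, then the residuation $a \ominus_k b$ of $a$ by $b$ in $\langle Lex_k(A), \leq_k, \otimes^k, \mathbf{1}^k\rangle$ exists and equals $$(a_1 \ominus b_1) \ldots (a_{\delta(a,b)} \ominus b_{\delta(a,b)})\,\Big(\bigvee Lex_{k-\delta(a,b)}(A)\Big),$$ that is, this tuple $r$ lies in $Lex_k(A)$ and for every $c \in Lex_k(A)$, $b \otimes^k c \leq_k a$ iff $c \leq_k r$.
   Context: A residuated partially ordered monoid $\langle A, \leq, \otimes, \ominus, \mathbf{1}\rangle$ consists of a partial order $\langle A,\leq\rangle$, a commutative monoid $\langle A,\otimes,\mathbf{1}\rangle$, and a binary operation $\ominus$ with $b \otimes c \leq a$ iff $c \leq a \ominus b$ for all $a,b,c\in A$. $a<b$ means $a\leq b$, $a\neq b$. $I(A) = \{c \in A \mid \forall a,b \in A.\ a \otimes c = b \otimes c \Rightarrow a = b\}$, $C(A)=A\setminus I(A)$. $Lex_k(A)\subseteq A^k$: $Lex_1(A) = A$, $Lex_{k+1}(A) = I(A)\, Lex_k(A) \cup C(A)\{\bot\}^k$ (concatenations of sequences; $\{\bot\}^k$ the singleton of $k$ copies of $\bot$). The order $\leq_k$: $\leq_1=\leq$, and for $k\geq2$, $a_1 \ldots a_k \leq_k b_1 \ldots b_k$ iff $a_1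 < b_1$, or $a_1 = b_1$ and $a_2 \ldots a_k \leq_{k-1} b_2 \ldots b_k$. $\otimes^k$ is componentwise, $\mathbf{1}^k=\mathbf{1}\ldots\mathbf{1}$. $\bigvee Lex_n(A)$ denotes the greatest element of $Lex_n(A)$ with respect to $\leq_n$ (the empty sequence when $n=0$). For $a,b\in Lex_k(A)$: $\gamma(a,b) = \min\{ i \mid a_i \ominus b_i \in C(A)\}$ and $\delta(a,b) = \min\{ i \mid (a_i \ominus b_i) \otimes b_i < a_i\}$, each equal to $k+1$ if the set is empty. *)

theory Defs
  imports Main
begin

definition rpom :: "('a \<Rightarrow> 'a \<Rightarrow> bool) \<Rightarrow> ('a \<Rightarrow> 'a \<Rightarrow> 'a) \<Rightarrow> ('a \<Rightarrow> 'a \<Rightarrow> 'a) \<Rightarrow> 'a \<Rightarrow> bool" where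
  "rpom le mult res one \<longleftrightarrow>
     (\<forall>a. le a a) \<and> (\<forall>a b c. le a b \<longrightarrow> le b c \<longrightarrow> le a c) \<and> (\<forall>a b. le a b \<longrightarrow> le b a \<longrightarrow> a = b) \<and>
     (\<forall>a b c. mult (mult a b) c = mult a (mult b c)) \<and> (\<forall>a b. mult a b = mult b a) \<and>
     (\<forall>a. mult one a = a) \<and>
     (\<forall>a b c. le (mult b c) a \<longleftrightarrow> le c (res a b))"

definition lt :: "('a \<Rightarrow> 'a \<Rightarrow> bool) \<Rightarrow> 'a \<Rightarrow> 'a \<Rightarrow> bool" where
  "lt le a b \<longleftrightarrow> le a b \<and> a \<noteq> b"

definition Icanc :: "('a \<Rightarrow> 'a \<Rightarrow> 'a) \<Rightarrow> 'a set" where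
  "Icanc mult = {c. \<forall>a b. mult a c = mult b c \<longrightarrow> a = b}"

definition Cnc :: "('a \<Rightarrow> 'a \<Rightarrow> 'a) \<Rightarrow> 'a set" where
  "Cnc mult = UNIV - Icanc mult"

text \<open>Lex_k(A) as a set of lists of length k. Lex_0 = {[]}, so that
  Lex_1 = I(A) \<union> C(A) = A, and Lex_(k+1) = I(A) Lex_k(A) \<union> C(A) {bt}^k.\<close>
fun Lex :: "('a \<Rightarrow> 'a \<Rightarrow> 'a) \<Rightarrow> 'a \<Rightarrow> nat \<Rightarrow> 'a list set" where
  "Lex mult bt 0 = {[]}"
| "Lex mult bt (Suc k) =
     {c # s | c s. c \<in> Icanc mult \<and> s \<in> Lex mult bt k}
     \<union> {c # replicate k bt | c. c \<in> Cnc mult}"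

fun lex_le :: "('a \<Rightarrow> 'a \<Rightarrow> bool) \<Rightarrow> 'a list \<Rightarrow> 'a list \<Rightarrow> bool" where
  "lex_le le [] [] = True"
| "lex_le le (a # as) (b # bs) = (lt le a b \<or> (a = b \<and> lex_le le as bs))"
| "lex_le le _ _ = False"

definition lex_top :: "('a \<Rightarrow> 'a \<Rightarrow> bool) \<Rightarrow> ('a \<Rightarrow> 'a \<Rightarrow> 'a) \<Rightarrow> 'a \<Rightarrow> nat \<Rightarrow> 'a list" where
  "lex_top le mult bt n =
     (THE g. g \<in> Lex mult bt n \<and> (\<forall>x \<in> Lex mult bt n. lex_le le x g))"

text \<open>gamma and delta, 1-indexed: position i refers to list entry i-1.\<close>
definition gamma :: "('a \<Rightarrow> 'a \<Rightarrow> 'a) \<Rightarrow> ('a \<Rightarrow> 'a \<Rightarrow> 'a) \<Rightarrow> 'a list \<Rightarrow> 'a list \<Rightarrow> nat" where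
  "gamma mult res a b =
     (let P = (\<lambda>i. 1 \<le> i \<and> i \<le> length a \<and> res (a ! (i-1)) (b ! (i-1)) \<in> Cnc mult)
      in if \<exists>i. P i then (LEAST i. P i) else length a + 1)"

definition delta :: "('a \<Rightarrow> 'a \<Rightarrow> bool) \<Rightarrow> ('a \<Rightarrow> 'a \<Rightarrow> 'a) \<Rightarrow> ('a \<Rightarrow> 'a \<Rightarrow> 'a) \<Rightarrow> 'a list \<Rightarrow> 'a list \<Rightarrow> nat" where
  "delta le mult res a b =
     (let P = (\<lambda>i. 1 \<le> i \<and> i \<le> length a \<and>
                  lt le (mult (res (a ! (i-1)) (b ! (i-1))) (b ! (i-1))) (a ! (i-1)))
      in if \<exists>i. P i then (LEAST i. P i) else length a + 1)"

end

theory Submission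
  imports Defs
begin

text \<open>Before position \<open>\<delta>\<close> the residual is
  exact, \<open>(a\<^sub>i \<ominus> b\<^sub>i) \<otimes> b\<^sub>i = a\<^sub>i\<close>, and \<open>b\<^sub>i\<close> is cancellative (otherwise \<open>a\<^sub>i\<close> would be
  non-cancellative too, all later entries of \<open>a\<close> and \<open>b\<close> would be \<open>\<bottom>\<close>, and position \<open>\<delta>\<close>
  would be exact as well); hence \<open>b\<^sub>i \<otimes> c\<^sub>i = a\<^sub>i\<close> iff \<open>c\<^sub>i = a\<^sub>i \<ominus> b\<^sub>i\<close>, and the
  comparison moves on. At position \<open>\<delta>\<close> the residual is strict, so \<open>b\<^sub>\<delta> \<otimes> c\<^sub>\<delta> \<le> a\<^sub>\<delta>\<close>
  already forces \<open>b\<^sub>\<delta> \<otimes> c\<^sub>\<delta> < a\<^sub>\<delta>\<close> and leaves the remaining entries of \<open>c\<close>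
  unconstrained, which is what the greatest element of \<open>Lex\<^sub>k\<^sub>-\<^sub>\<delta>(A)\<close> expresses. Since
  \<open>\<delta> < \<gamma>\<close>, all residuals up to position \<open>\<delta>\<close> are cancellative, so the candidate lies
  in \<open>Lex\<^sub>k(A)\<close>.\<close>

lemma Lex_length: "x \<in> Lex mult bt n \<Longrightarrow> length x = n"
  by (induction n arbitrary: x) auto

lemma Lex_nth_bot_after_Cnc:
  "x \<in> Lex mult bt n \<Longrightarrow> i < j \<Longrightarrow> j < n \<Longrightarrow> x ! i \<in> Cnc mult \<Longrightarrow> x ! j = bt"
proof (induction n arbitrary: x i j)
  case 0
  then show ?case by simp
next
  case (Suc n)
  from Suc.prems(1) consider
      (canc) c s where "x = c # s" "c \<in> Icanc mult" "s \<in> Lex mult bt n"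
    | (noncanc) c where "x = c # replicate n bt"
    by auto
  then show ?case
  proof cases
    case canc
    then show ?thesis using Suc by (cases i; cases j) (auto simp: Cnc_def)
  next
    case noncanc
    then show ?thesis using Suc.prems(2,3) by (cases j) auto
  qed
qed

lemma Lex_Cons_Icanc_tail:
  "z # cs \<in> Lex mult bt (Suc n) \<Longrightarrow> z \<in> Icanc mult \<Longrightarrow> cs \<in> Lex mult bt n"
  by (auto simp: Cnc_def)

lemma Icanc_append_Lex:
  "set p \<subseteq> Icanc mult \<Longrightarrow> s \<in> Lex mult bt n \<Longrightarrow> p @ s \<in> Lex mult bt (length p + n)"
  by (induction p) auto

lemma lex_le_refl: "lex_le le x x"
  by (induction x) auto

lemma gamma_le_Suc_length: "gamma mult res a b \<le> Suc (length a)"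
  unfolding gamma_def Let_def
  by (auto intro: order.trans[OF Least_le])

lemma res_Icanc_before_gamma:
  assumes "Suc i < gamma mult res a b" and "i < length a"
  shows "res (a ! i) (b ! i) \<in> Icanc mult"
proof (rule ccontr)
  assume "res (a ! i) (b ! i) \<notin> Icanc mult"
  then have "gamma mult res a b \<le> Suc i"
    using assms(2) unfolding gamma_def Let_def Cnc_def
    by (auto intro!: Least_le exI[of _ "Suc i"])
  with assms(1) show False by simp
qed

lemma delta_strict:
  assumes "delta le mult res a b \<le> length a"
  defines "i \<equiv> delta le mult res a b - 1"
  shows "0 < delta le mult res a b"
    and "lt le (mult (res (a ! i) (b ! i)) (b ! i)) (a ! i)"
proof -
  define P where "P j \<longleftrightarrow> 1 \<le> j \<and> j \<le> length a \<and>
    lt le (mult (res (a ! (j-1)) (b ! (j-1))) (b ! (j-1))) (a ! (j-1))" for j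
  have delta: "delta le mult res a b = (if \<exists>j. P j then LEAST j. P j else length a + 1)"
    unfolding delta_def P_def Let_def ..
  with assms(1) have "\<exists>j. P j" by (auto split: if_splits)
  then have "P (delta le mult res a b)" unfolding delta by (auto intro: LeastI_ex)
  then show "0 < delta le mult res a b" and "lt le (mult (res (a ! i) (b ! i)) (b ! i)) (a ! i)"
    unfolding P_def i_def by auto
qed

lemma not_strict_before_delta:
  assumes "Suc i < delta le mult res a b" and "i < length a"
  shows "\<not> lt le (mult (res (a ! i) (b ! i)) (b ! i)) (a ! i)"
proof
  assume "lt le (mult (res (a ! i) (b ! i)) (b ! i)) (a ! i)"
  then have "delta le mult res a b \<le> Suc i"
    using assms(2) unfolding delta_def Let_def
    by (auto intro!: Least_le exI[of _ "Suc i"])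
  with assms(1) show False by simp
qed

lemma delta_lt_gamma:
  assumes "delta le mult res a b < gamma mult res a b"
  defines "d \<equiv> delta le mult res a b"
  shows "0 < d" and "d \<le> length a"
    and "lt le (mult (res (a ! (d - 1)) (b ! (d - 1))) (b ! (d - 1))) (a ! (d - 1))"
    and "i < d \<Longrightarrow> res (a ! i) (b ! i) \<in> Icanc mult"
proof -
  show "d \<le> length a"
    using assms(1) gamma_le_Suc_length[of mult res a b] unfolding d_def by linarith
  then show "0 < d"
    and "lt le (mult (res (a ! (d - 1)) (b ! (d - 1))) (b ! (d - 1))) (a ! (d - 1))"
    using delta_strict[of le mult res a b] unfolding d_def by auto
  show "res (a ! i) (b ! i) \<in> Icanc mult" if "i < d"
    using that res_Icanc_before_gamma[of i mult res a b] assms(1) \<open>d \<le> length a\<close>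
    unfolding d_def by simp
qed

definition exact_canc_res :: "('a \<Rightarrow> 'a \<Rightarrow> 'a) \<Rightarrow> ('a \<Rightarrow> 'a \<Rightarrow> 'a) \<Rightarrow> 'a \<Rightarrow> 'a \<Rightarrow> bool" where
  "exact_canc_res mult res x y \<longleftrightarrow>
     y \<in> Icanc mult \<and> res x y \<in> Icanc mult \<and> mult (res x y) y = x"

locale residuated_pomonoid =
  fixes le :: "'a \<Rightarrow> 'a \<Rightarrow> bool" and mult res :: "'a \<Rightarrow> 'a \<Rightarrow> 'a" and one :: 'a
  assumes rpom: "rpom le mult res one"
begin

lemma
  shows refl_le: "le x x"
    and trans_le: "le x y \<Longrightarrow> le y z \<Longrightarrow> le x z"
    and antisym_le: "le x y \<Longrightarrow> le y x \<Longrightarrow> x = y"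
    and assoc_mult: "mult (mult x y) z = mult x (mult y z)"
    and comm_mult: "mult x y = mult y x"
    and residuation: "le (mult y z) x \<longleftrightarrow> le z (res x y)"
  using rpom unfolding rpom_def by blast+

lemma mult_isotone: "le x y \<Longrightarrow> le (mult b x) (mult b y)"
  by (meson residuation refl_le trans_le)

lemma res_mult_le: "le (mult (res x y) y) x"
  by (metis residuation refl_le comm_mult)

lemma Icanc_right_factor:
  assumes "mult r y \<in> Icanc mult"
  shows "y \<in> Icanc mult"
  unfolding Icanc_def
proof (intro CollectI allI impI)
  fix p q assume "mult p y = mult q y"
  then have "mult p (mult r y) = mult q (mult r y)"
    by (metis assoc_mult comm_mult)
  with assms show "p = q" by (auto simp: Icanc_def)
qed

lemma lex_le_antisym: "lex_le le x y \<Longrightarrow> lex_le le y x \<Longrightarrow> x = y"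
proof (induction x arbitrary: y)
  case Nil
  then show ?case by (cases y) auto
next
  case (Cons u us)
  then show ?case by (cases y) (auto simp: lt_def dest: antisym_le)
qed

lemma lex_le_map2_mult_strict_head:
  assumes strict: "lt le (mult (res x y) y) x"
  shows "lex_le le (map2 mult (y # bs) (z # cs)) (x # as) \<longleftrightarrow> le z (res x y)"
proof -
  have "mult y z \<noteq> x" if "le z (res x y)"
  proof
    assume "mult y z = x"
    moreover have "le (mult y z) (mult y (res x y))" using that by (rule mult_isotone)
    ultimately show False
      using strict antisym_le comm_mult unfolding lt_def by metis
  qed
  moreover have "le (mult y z) x \<longleftrightarrow> le z (res x y)"
    by (rule residuation)
  ultimately show ?thesis using refl_le by (auto simp: lt_def)
qed

lemma lex_le_map2_mult_exact_head:
  assumes "y \<in> Icanc mult" and exact: "mult (res x y) y = x"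
  shows "lex_le le (map2 mult (y # bs) (z # cs)) (x # as) \<longleftrightarrow>
    lt le z (res x y) \<or> (z = res x y \<and> lex_le le (map2 mult bs cs) as)"
proof -
  have "mult y z = x \<longleftrightarrow> z = res x y"
  proof
    assume "mult y z = x"
    then have "mult z y = mult (res x y) y"
      using exact comm_mult[of z y] by simp
    then show "z = res x y"
      using \<open>y \<in> Icanc mult\<close> unfolding Icanc_def by blast
  next
    assume "z = res x y"
    then show "mult y z = x"
      using exact comm_mult[of y z] by simp
  qed
  moreover have "le (mult y z) x \<longleftrightarrow> le z (res x y)"
    by (rule residuation)
  ultimately show ?thesis by (auto simp: lt_def)
qed

end

locale residuated_pomonoid_bot = residuated_pomonoid +
  fixes bt :: 'a
  assumes bot_least: "le bt x"
begin

lemma mult_bot: "mult x bt = bt"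
  by (metis residuation bot_least antisym_le)

lemma le_res_bot_bot: "le x (res bt bt)"
  by (metis residuation mult_bot comm_mult refl_le)

lemma ex_lex_greatest_Lex: "\<exists>g \<in> Lex mult bt n. \<forall>x \<in> Lex mult bt n. lex_le le x g"
proof (induction n)
  case 0
  then show ?case by auto
next
  case (Suc n)
  define t where "t = res bt bt"
  show ?case
  proof (cases "t \<in> Icanc mult")
    case True
    from Suc obtain g where "g \<in> Lex mult bt n" "\<forall>x \<in> Lex mult bt n. lex_le le x g" by blast
    with True show ?thesis
      by (intro bexI[of _ "t # g"]) (auto simp: lt_def Cnc_def t_def le_res_bot_bot)
  next
    case False
    then show ?thesis
      by (intro bexI[of _ "t # replicate n bt"])
        (auto simp: lt_def Cnc_def t_def le_res_bot_bot lex_le_refl)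
  qed
qed

lemma
  shows lex_top_in_Lex: "lex_top le mult bt n \<in> Lex mult bt n"
    and lex_le_lex_top: "x \<in> Lex mult bt n \<Longrightarrow> lex_le le x (lex_top le mult bt n)"
proof -
  obtain g where g: "g \<in> Lex mult bt n" "\<forall>x \<in> Lex mult bt n. lex_le le x g"
    using ex_lex_greatest_Lex by blast
  have "lex_top le mult bt n = g"
    unfolding lex_top_def
  proof (rule the_equality)
    show "g \<in> Lex mult bt n \<and> (\<forall>x \<in> Lex mult bt n. lex_le le x g)"
      using g by blast
  next
    fix h assume "h \<in> Lex mult bt n \<and> (\<forall>x \<in> Lex mult bt n. lex_le le x h)"
    then show "h = g"
      using g lex_le_antisym by blast
  qed
  with g show "lex_top le mult bt n \<in> Lex mult bt n"
    and "x \<in> Lex mult bt n \<Longrightarrow> lex_le le x (lex_top le mult bt n)" by auto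
qed

lemma Icanc_before_strict:
  assumes "a \<in> Lex mult bt k" and "b \<in> Lex mult bt k" and "i < j" and "j < k"
    and "mult (res (a ! i) (b ! i)) (b ! i) = a ! i"
    and "lt le (mult (res (a ! j) (b ! j)) (b ! j)) (a ! j)"
  shows "b ! i \<in> Icanc mult"
proof (rule ccontr)
  assume "b ! i \<notin> Icanc mult"
  moreover have "a ! i \<notin> Icanc mult"
    using Icanc_right_factor[of "res (a ! i) (b ! i)" "b ! i"] assms(5) calculation by auto
  ultimately have "a ! i \<in> Cnc mult" and "b ! i \<in> Cnc mult"
    by (simp_all add: Cnc_def)
  then have "a ! j = bt" and "b ! j = bt"
    using Lex_nth_bot_after_Cnc[OF assms(1,3,4)] Lex_nth_bot_after_Cnc[OF assms(2,3,4)]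
    by simp_all
  with assms(6) show False by (simp add: lt_def mult_bot)
qed

lemma lex_le_map2_mult_iff:
  assumes "list_all2 (exact_canc_res mult res) pa pb"
    and strict: "lt le (mult (res x y) y) x" and "res x y \<in> Icanc mult"
    and "c \<in> Lex mult bt (length pa + Suc n)"
  shows "lex_le le (map2 mult (pb @ y # bs) c) (pa @ x # as) \<longleftrightarrow>
    lex_le le c (map2 res pa pb @ res x y # lex_top le mult bt n)"
  using assms(1,4)
proof (induction arbitrary: c rule: list_all2_induct)
  case Nil
  then obtain z cs where c: "c = z # cs" and zcs: "z # cs \<in> Lex mult bt (Suc n)"
    by (cases c) auto
  have "cs \<in> Lex mult bt n" if "z = res x y"
    using Lex_Cons_Icanc_tail[OF zcs] that \<open>res x y \<in> Icanc mult\<close> by blast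
  then show ?case
    unfolding c using lex_le_map2_mult_strict_head[OF strict] lex_le_lex_top refl_le
    by (auto simp: lt_def)
next
  case (Cons x' pa y' pb)
  then obtain z cs
    where c: "c = z # cs" and zcs: "z # cs \<in> Lex mult bt (Suc (length pa + Suc n))"
    by (cases c) auto
  have "cs \<in> Lex mult bt (length pa + Suc n)" if "z = res x' y'"
    using Lex_Cons_Icanc_tail[OF zcs] that Cons.hyps(1) unfolding exact_canc_res_def by blast
  then show ?case
    unfolding c using lex_le_map2_mult_exact_head Cons by (auto simp: exact_canc_res_def)
qed

lemma exact_canc_res_before_delta:
  assumes a: "a \<in> Lex mult bt k" and b: "b \<in> Lex mult bt k"
    and "delta le mult res a b < gamma mult res a b"
  defines "d \<equiv> delta le mult res a b"
  shows "list_all2 (exact_canc_res mult res) (take (d - 1) a) (take (d - 1) b)"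
proof (rule list_all2_all_nthI)
  have la: "length a = k" and lb: "length b = k"
    using a b by (auto dest: Lex_length)
  then show "length (take (d - 1) a) = length (take (d - 1) b)" by simp
  note d = delta_lt_gamma[OF assms(3), folded d_def]
  fix i assume "i < length (take (d - 1) a)"
  then have i: "i < d - 1" and "d - 1 < k"
    using d(1,2) la by simp_all
  have "\<not> lt le (mult (res (a ! i) (b ! i)) (b ! i)) (a ! i)"
    using not_strict_before_delta[of i le mult res a b] i d(2) unfolding d_def by simp
  then have exact: "mult (res (a ! i) (b ! i)) (b ! i) = a ! i"
    using res_mult_le unfolding lt_def by blast
  moreover have "b ! i \<in> Icanc mult"
    using Icanc_before_strict[OF a b i \<open>d - 1 < k\<close> exact d(3)] .
  ultimately show "exact_canc_res mult res (take (d - 1) a ! i) (take (d - 1) b ! i)"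
    using i d(4)[of i] by (simp add: exact_canc_res_def)
qed

end

theorem proposition3:
  fixes le :: "'a \<Rightarrow> 'a \<Rightarrow> bool" and mult res :: "'a \<Rightarrow> 'a \<Rightarrow> 'a"
    and one bt :: 'a and k :: nat and a b :: "'a list"
  assumes "rpom le mult res one"
    and "\<forall>x. le bt x"
    and "k \<ge> 1"
    and "a \<in> Lex mult bt k" and "b \<in> Lex mult bt k"
    and "delta le mult res a b < gamma mult res a b"
  shows "let d = delta le mult res a b;
             r = map2 res (take d a) (take d b) @ lex_top le mult bt (k - d)
         in r \<in> Lex mult bt k \<and>
            (\<forall>c \<in> Lex mult bt k. lex_le le (map2 mult b c) a \<longleftrightarrow> lex_le le c r)"
proof -
  interpret residuated_pomonoid_bot le mult res one bt
    using assms(1,2) by unfold_locales auto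
  define d where "d = delta le mult res a b"
  have la: "length a = k" and lb: "length b = k"
    using assms(4,5) by (auto dest: Lex_length)
  note d = delta_lt_gamma[OF assms(6), folded d_def]
  have prefix: "list_all2 (exact_canc_res mult res) (take (d - 1) a) (take (d - 1) b)"
    using exact_canc_res_before_delta[OF assms(4-6)] unfolding d_def .
  have r: "map2 res (take d a) (take d b) @ lex_top le mult bt (k - d) =
      map2 res (take (d - 1) a) (take (d - 1) b) @
        res (a ! (d - 1)) (b ! (d - 1)) # lex_top le mult bt (k - d)"
    using d(1,2) la lb by (cases d) (simp_all add: take_Suc_conv_app_nth)
  have "set (map2 res (take d a) (take d b)) \<subseteq> Icanc mult"
    using d(4) by (auto simp: set_zip)
  from Icanc_append_Lex[OF this lex_top_in_Lex[of "k - d"]]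
  have "map2 res (take d a) (take d b) @ lex_top le mult bt (k - d) \<in> Lex mult bt k"
    using d(2) la lb by simp
  moreover have "lex_le le (map2 mult b c) a \<longleftrightarrow>
      lex_le le c (map2 res (take d a) (take d b) @ lex_top le mult bt (k - d))"
    if "c \<in> Lex mult bt k" for c
    using lex_le_map2_mult_iff[OF prefix d(3) d(4), of c "k - d" "drop d b" "drop d a"]
      id_take_nth_drop[symmetric, of "d - 1" a] id_take_nth_drop[symmetric, of "d - 1" b]
      that r d(1,2) la lb
    by simp
  ultimately show ?thesis unfolding d_def Let_def by blast
qed

end
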